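(* Let $p$ be a prime, $n\ge1$, $s>0$ an integer, and let $U$ and $U_m$ ($m\ge1$) be additive subgroups of $\mathcal{A}_{n,p}=R^n$ with $U\subset U_m$ and such that $e(U)$ and $e(U_m)$ divide $s$ for all $m$. Suppose $U_m\to U$ (in the space of subsets of $R^n$). Then for any $v\in R^n$, the subgroups $V_m\le\mathcal{L}_{n,p}$ with triples $(s,U_m,v)$ converge to the subgroup $V$ with triple $(s,U,v)$.
   Context: $R=\mathbb{F}_p[x,x^{-1}]$; $\mathcal{A}_{n,p}=\bigoplus_{\mathbb{Z}}(\mathbb{Z}/p\mathbb{Z})^n$ is identified with $R^n$, $x$ acting by the shift $(x\omega)_i=\omega_{i+1}$. $\mathcal{L}_{n,p}=\mathcal{A}_{n,p}\rtimes\mathbb{Z}$ with elements $(w,t)$ and product $(v,s)(w,t)=(v+x^sw,s+t)$. For an additive subgroup $U$, $e(U)$ is the minimal positive $e$ with $x^eU=U$ ($+\infty$ if none). Given $s>0$, an additive subgroup $U\subset\mathcal{A}_{n,p}$ with $x^sU=U$, and $v\in\mathcal{A}_{n,p}$, the subgroup with triple $(s,U,v)$ is the unique subgroup $V\le\mathcal{L}_{n,p}$ whose projection to $\mathbb{Z}$ is $s\mathbb{Z}$, with $V\cap\mathcal{A}_{n,p}=U$ and $(v,s)\in V$; explicitly $V=\{(w,t): s\mid t,\ (w,t)(v,s)^{-t/s}\in U\times\{0\}\}$. Convergence in ${\rm Sub}(\mathcal{L}_{n,p})$ and of subsets of $R^n$ is pointwise convergence of indicator functions. *)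

theory Defs
  imports "HOL-Computational_Algebra.Primes" "HOL-Library.Extended_Nat"
begin

text \<open>Elements of A_{n,p} = direct sum over Z of (Z/pZ)^n, represented as functions
  w :: int \<Rightarrow> nat \<Rightarrow> int, where w i j is the j-th coordinate (j < n) of the i-th
  summand, taken as a residue in {0..<p}; finitely many i have w i nonzero.\<close>

type_synonym elA = "int \<Rightarrow> nat \<Rightarrow> int"

definition zeroA :: elA where "zeroA = (\<lambda>i j. 0)"

definition carrierA :: "nat \<Rightarrow> int \<Rightarrow> elA set" where
  "carrierA n p = {w. (\<forall>i j. 0 \<le> w i j \<and> w i j < p) \<and> (\<forall>i j. n \<le> j \<longrightarrow> w i j = 0)
                      \<and> finite {i. w i \<noteq> (\<lambda>j. 0)}}"

definition addA :: "int \<Rightarrow> elA \<Rightarrow> elA \<Rightarrow> elA" where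
  "addA p a b = (\<lambda>i j. (a i j + b i j) mod p)"

definition negA :: "int \<Rightarrow> elA \<Rightarrow> elA" where
  "negA p a = (\<lambda>i j. (- a i j) mod p)"

text \<open>Action of x^k: (x omega)_i = omega_{i+1}, hence (x^k omega)_i = omega_{i+k}.\<close>
definition shiftA :: "int \<Rightarrow> elA \<Rightarrow> elA" where
  "shiftA k w = (\<lambda>i. w (i + k))"

definition additive_subgroup :: "nat \<Rightarrow> int \<Rightarrow> elA set \<Rightarrow> bool" where
  "additive_subgroup n p U \<longleftrightarrow> U \<subseteq> carrierA n p \<and> zeroA \<in> U
     \<and> (\<forall>a\<in>U. \<forall>b\<in>U. addA p a b \<in> U) \<and> (\<forall>a\<in>U. negA p a \<in> U)"

definition eU :: "elA set \<Rightarrow> enat" where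
  "eU U = (if \<exists>e::nat. 0 < e \<and> shiftA (int e) ` U = U
           then enat (LEAST e::nat. 0 < e \<and> shiftA (int e) ` U = U) else \<infinity>)"

definition Lmul :: "int \<Rightarrow> elA \<times> int \<Rightarrow> elA \<times> int \<Rightarrow> elA \<times> int" where
  "Lmul p g h = (addA p (fst g) (shiftA (snd g) (fst h)), snd g + snd h)"

definition Linv :: "int \<Rightarrow> elA \<times> int \<Rightarrow> elA \<times> int" where
  "Linv p g = (negA p (shiftA (- snd g) (fst g)), - snd g)"

fun Lpow_nat :: "int \<Rightarrow> elA \<times> int \<Rightarrow> nat \<Rightarrow> elA \<times> int" where
  "Lpow_nat p g 0 = (zeroA, 0)"
| "Lpow_nat p g (Suc k) = Lmul p g (Lpow_nat p g k)"

definition Lpow :: "int \<Rightarrow> elA \<times> int \<Rightarrow> int \<Rightarrow> elA \<times> int" where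
  "Lpow p g k = (if 0 \<le> k then Lpow_nat p g (nat k) else Linv p (Lpow_nat p g (nat (- k))))"

definition carrierL :: "nat \<Rightarrow> int \<Rightarrow> (elA \<times> int) set" where
  "carrierL n p = carrierA n p \<times> UNIV"

definition triple_subgroup :: "nat \<Rightarrow> int \<Rightarrow> int \<Rightarrow> elA set \<Rightarrow> elA \<Rightarrow> (elA \<times> int) set" where
  "triple_subgroup n p s U v = {(w, t). w \<in> carrierA n p \<and> s dvd t \<and>
       Lmul p (w, t) (Lpow p (v, s) (- (t div s))) \<in> U \<times> {0}}"

end

theory Submission
  imports Defs
begin

text \<open>Whether \<open>g = (w, t)\<close> lies in the subgroup with triple \<open>(s, U, v)\<close> depends on \<open>U\<close>
  only through whether the single element \<open>g (v, s)^(-t/s)\<close> of \<open>A\<^sub>n\<^sub>,\<^sub>p\<close> lies in \<open>U\<close>.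
  Hence pointwise convergence of the \<open>U\<^sub>m\<close> transfers directly to the \<open>V\<^sub>m\<close>.\<close>

lemma triple_subgroup_eq:
  "triple_subgroup n p s U v =
     {g \<in> triple_subgroup n p s UNIV v. fst (Lmul p g (Lpow p (v, s) (- (snd g div s)))) \<in> U}"
  by (auto simp: triple_subgroup_def mem_Times_iff)

lemma triple_subgroup_pointwise_limit:
  assumes "\<forall>w. \<forall>\<^sub>F m in F. (w \<in> Um m \<longleftrightarrow> w \<in> U)"
  shows "\<forall>g. \<forall>\<^sub>F m in F.
           (g \<in> triple_subgroup n p s (Um m) v \<longleftrightarrow> g \<in> triple_subgroup n p s U v)"
proof
  fix g :: "elA \<times> int"
  let ?c = "fst (Lmul p g (Lpow p (v, s) (- (snd g div s))))"
  have "\<forall>\<^sub>F m in F. (?c \<in> Um m \<longleftrightarrow> ?c \<in> U)"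
    using assms by blast
  then show "\<forall>\<^sub>F m in F.
           (g \<in> triple_subgroup n p s (Um m) v \<longleftrightarrow> g \<in> triple_subgroup n p s U v)"
    by (rule eventually_mono) (subst (1 2) triple_subgroup_eq, blast)
qed

theorem lemma6p17:
  fixes p :: int and n :: nat and s :: int
    and U :: "elA set" and Um :: "nat \<Rightarrow> elA set" and v :: elA
  assumes "prime p" and "1 \<le> n" and "0 < s"
    and "additive_subgroup n p U"
    and "\<forall>m\<ge>1. additive_subgroup n p (Um m)"
    and "\<forall>m\<ge>1. U \<subseteq> Um m"
    and "\<exists>e. eU U = enat e \<and> int e dvd s"
    and "\<forall>m\<ge>1. \<exists>e. eU (Um m) = enat e \<and> int e dvd s"
    and "\<forall>w. \<forall>\<^sub>F m in sequentially. (w \<in> Um m \<longleftrightarrow> w \<in> U)"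
    and "v \<in> carrierA n p"
  shows "\<forall>g. \<forall>\<^sub>F m in sequentially.
           (g \<in> triple_subgroup n p s (Um m) v \<longleftrightarrow> g \<in> triple_subgroup n p s U v)"
  using assms(9) by (rule triple_subgroup_pointwise_limit)

end
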